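(* Let $I$ be a nonempty finite index set, $\{r_i\}_{i\in I}\subseteq S$ and $\{e_i\}_{i\in I}\subseteq\mathrm{Exp}$, and let $E=\{e_i: i\in I\}$. Then $\bigoplus_{i\in I}r_i\cdot e_i\equiv\bigoplus_{e\in E}\big(\sum_{i:\,e_i=e}r_i\big)\cdot e$.
   Context: Fix a finite set $T$ of primitive tests, a set $\mathrm{Act}$ of atomic actions, a set $\mathrm{Out}$ of return values, and a semiring $(S,+,\cdot,0,1)$ that is positive, refinement and Conway (with ${}^*:S\to S$ satisfying $(a+b)^*=a^*(ba^* )^*$, $(ab)^*=1+a(ba)^*b$). Tests: $b,c\in\mathrm{BExp}::=\mathtt{0}\mid\mathtt{1}\mid t\ (t\in T)\mid\bar b\mid b+c\mid bc$ ($\mathtt 0,\mathtt 1$ false/true, distinct from semiring $0,1$); $\equiv_{BA}$ is Boolean equivalence; $\mathrm{At}$ is the finite set of atoms of the free Boolean algebra on $T$; $\alpha\le b$ means $\alpha$ entails $b$. Expressions: $e,f\in\mathrm{Exp}::= p\in\mathrm{Act}\mid b\in\mathrm{BExp}\mid e+_b f\mid e;f\mid e^{(b)}\mid v\in\mathrm{Out}\mid e\oplus_{r,s} f\ (r,s\in S)$; $\odot r:=\mathtt 1\oplus_{r,0}\mathtt 0$. Generalized weighted sum: for nonempty finite $I$, $\bigoplus_{i\in I}r_i\cdot e_i:=e_j\oplus_{r_j,1}\big(\bigoplus_{i\in I\setminus\{j\}}r_i\cdot e_i\big)$ for some $j\in I$, where the empty sum is the expression $\odot0$ (this is well defined up to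 $\equiv$). $E:\mathrm{Exp}\to S^{\mathrm{At}}$: $E(p)_\alpha=E(v)_\alpha=0$; $E(b)_\alpha=1$ if $\alpha\le b$ else $0$; $E(e\oplus_{r,s}f)_\alpha=rE(e)_\alpha+sE(f)_\alpha$; $E(e+_bf)_\alpha=E(e)_\alpha$ if $\alpha\le b$ else $E(f)_\alpha$; $E(e;f)_\alpha=E(e)_\alpha E(f)_\alpha$; $E(e^{(b)})_\alpha=E(\bar b)_\alpha$. The relation $\equiv$ is the smallest congruence on $\mathrm{Exp}$ (tests taken up to $\equiv_{BA}$; sequencing binds tighter than $\oplus$, $\odot$ binds tightest) containing, for all $e,f,g\in\mathrm{Exp}$, tests $b,c$, $v\in\mathrm{Out}$, $r,s,t,u\in S$: (G1) $e+_be\equiv e$; (G2) $e+_bf\equiv b;e+_bf$; (G3) $e+_bf\equiv f+_{\bar b}e$; (G4) $(e+_bf)+_cg\equiv e+_{bc}(f+_cg)$; (D1) $e\oplus_{r,s}(f+_bg)\equiv(e\oplus_{r,s}f)+_b(e\oplus_{r,s}g)$; (D2) $e\oplus_{r,s}(f\oplus_{t,u}g)\equiv e\oplus_{r,1}(f\oplus_{st,su}g)$; (D3) $b;(e\oplus_{r,s}f)\equiv b;(b;e\oplus_{r,s}b;f)$; (S1) $\mathtt 1;e\equiv e\equiv e;\mathtt 1$; (S2) $(e;f);g\equiv e;(f;g)$; (S3) $\mathtt 0;e\equiv\mathtt 0$; (S4) $(e\oplus_{r,s}f);g\equiv e;g\oplus_{r,s}f;g$; (S5) $(e+_bf);g\equiv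 e;g+_bf;g$; (S6) $v;e\equiv v$; (S7) $b;c\equiv bc$; (L1) $e^{(b)}\equiv e;e^{(b)}+_b\mathtt 1$; (C1) $\odot1\equiv\mathtt 1$; (C2) $\odot0;e\equiv\odot0$; (W1) $e\oplus_{r,s}e\equiv\odot(r+s);e$; (W2) $e\oplus_{r,s}f\equiv f\oplus_{s,r}e$; (W3) $e\oplus_{r,s}(f\oplus_{t,u}g)\equiv(e\oplus_{r,st}f)\oplus_{1,su}g$; (W4) $e\oplus_{ru,s}f\equiv(\odot u;e)\oplus_{r,s}f$; and closed under the rules (L2) if $e\equiv(f\oplus_{r,s}\mathtt 1)+_cg$ then $c;e^{(b)}\equiv c;((\odot(s^*r);f;e^{(b)})+_b\mathtt 1)$; (F1) if $g\equiv e;g+_bf$ and $E(e)_\alpha=0$ for all $\alpha\in\mathrm{At}$ then $g\equiv e^{(b)};f$. *)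

theory Defs
  imports Main
begin

text \<open>The weight semiring is modelled by a type of class semiring_0 + monoid_mult
 (an associative, not necessarily commutative semiring with 0 and 1, 0 annihilating).\<close>

definition positive_semiring :: "'s::{semiring_0,monoid_mult} itself \<Rightarrow> bool" where
  "positive_semiring _ \<longleftrightarrow>
     (\<forall>a b::'s. a + b = 0 \<longrightarrow> a = 0 \<and> b = 0) \<and>
     (\<forall>a b::'s. a * b = 0 \<longrightarrow> a = 0 \<or> b = 0)"

definition refinement_semiring :: "'s::{semiring_0,monoid_mult} itself \<Rightarrow> bool" where
  "refinement_semiring _ \<longleftrightarrow>
     (\<forall>(A::nat set) (B::nat set) (a::nat \<Rightarrow> 's) (b::nat \<Rightarrow> 's).
        finite A \<longrightarrow> finite B \<longrightarrow> sum a A = sum b B \<longrightarrow>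
        (\<exists>c::nat \<Rightarrow> nat \<Rightarrow> 's.
            (\<forall>i\<in>A. sum (c i) B = a i) \<and> (\<forall>j\<in>B. sum (\<lambda>i. c i j) A = b j)))"

definition conway_star :: "('s::{semiring_0,monoid_mult} \<Rightarrow> 's) \<Rightarrow> bool" where
  "conway_star st \<longleftrightarrow>
     (\<forall>a b. st (a + b) = st a * st (b * st a)) \<and>
     (\<forall>a b. st (a * b) = 1 + a * st (b * a) * b)"

datatype 't bexp = BZero | BOne | BPrim 't | BNot "'t bexp" | BOr "'t bexp" "'t bexp"
  | BAnd "'t bexp" "'t bexp"

text \<open>Atoms of the free Boolean algebra on the (finite) type of primitive tests are
 identified with valuations, i.e. sets of primitive tests that are true.
 bsem b \<alpha> means \<alpha> \<le> b.\<close>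

primrec bsem :: "'t bexp \<Rightarrow> 't set \<Rightarrow> bool" where
  "bsem BZero \<alpha> = False"
| "bsem BOne \<alpha> = True"
| "bsem (BPrim t) \<alpha> = (t \<in> \<alpha>)"
| "bsem (BNot b) \<alpha> = (\<not> bsem b \<alpha>)"
| "bsem (BOr b c) \<alpha> = (bsem b \<alpha> \<or> bsem c \<alpha>)"
| "bsem (BAnd b c) \<alpha> = (bsem b \<alpha> \<and> bsem c \<alpha>)"

definition beq :: "'t bexp \<Rightarrow> 't bexp \<Rightarrow> bool" where
  "beq b c \<longleftrightarrow> (\<forall>\<alpha>. bsem b \<alpha> = bsem c \<alpha>)"

text \<open>Act p: atomic action; Tst b: test; Guard e b f: e +_b f; Seq e f: e;f;
 Loop e b: e^(b); Ret v: return value; WSum e r s f: e \<oplus>_{r,s} f.\<close>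

datatype ('t, 'p, 'v, 's) exp =
    Act 'p
  | Tst "'t bexp"
  | Guard "('t, 'p, 'v, 's) exp" "'t bexp" "('t, 'p, 'v, 's) exp"
  | Seq "('t, 'p, 'v, 's) exp" "('t, 'p, 'v, 's) exp"
  | Loop "('t, 'p, 'v, 's) exp" "'t bexp"
  | Ret 'v
  | WSum "('t, 'p, 'v, 's) exp" 's 's "('t, 'p, 'v, 's) exp"

definition odot :: "'s::{semiring_0,monoid_mult} \<Rightarrow> ('t, 'p, 'v, 's) exp" where
  "odot r = WSum (Tst BOne) r 0 (Tst BZero)"

primrec Esem :: "('t, 'p, 'v, 's::{semiring_0,monoid_mult}) exp \<Rightarrow> 't set \<Rightarrow> 's" where
  "Esem (Act p) \<alpha> = 0"
| "Esem (Ret v) \<alpha> = 0"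
| "Esem (Tst b) \<alpha> = (if bsem b \<alpha> then 1 else 0)"
| "Esem (WSum e r s f) \<alpha> = r * Esem e \<alpha> + s * Esem f \<alpha>"
| "Esem (Guard e b f) \<alpha> = (if bsem b \<alpha> then Esem e \<alpha> else Esem f \<alpha>)"
| "Esem (Seq e f) \<alpha> = Esem e \<alpha> * Esem f \<alpha>"
| "Esem (Loop e b) \<alpha> = (if bsem (BNot b) \<alpha> then 1 else 0)"

inductive eqv :: "('s::{semiring_0,monoid_mult} \<Rightarrow> 's) \<Rightarrow>
    ('t, 'p, 'v, 's) exp \<Rightarrow> ('t, 'p, 'v, 's) exp \<Rightarrow> bool" for st where
  refl: "eqv st e e"
| sym: "eqv st e f \<Longrightarrow> eqv st f e"
| trans: "eqv st e f \<Longrightarrow> eqv st f g \<Longrightarrow> eqv st e g"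
| cong_Tst: "beq b c \<Longrightarrow> eqv st (Tst b) (Tst c)"
| cong_Guard: "eqv st e e' \<Longrightarrow> beq b c \<Longrightarrow> eqv st f f' \<Longrightarrow> eqv st (Guard e b f) (Guard e' c f')"
| cong_Seq: "eqv st e e' \<Longrightarrow> eqv st f f' \<Longrightarrow> eqv st (Seq e f) (Seq e' f')"
| cong_Loop: "eqv st e e' \<Longrightarrow> beq b c \<Longrightarrow> eqv st (Loop e b) (Loop e' c)"
| cong_WSum: "eqv st e e' \<Longrightarrow> eqv st f f' \<Longrightarrow> eqv st (WSum e r s f) (WSum e' r s f')"
| G1: "eqv st (Guard e b e) e"
| G2: "eqv st (Guard e b f) (Guard (Seq (Tst b) e) b f)"
| G3: "eqv st (Guard e b f) (Guard f (BNot b) e)"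
| G4: "eqv st (Guard (Guard e b f) c g) (Guard e (BAnd b c) (Guard f c g))"
| D1: "eqv st (WSum e r s (Guard f b g)) (Guard (WSum e r s f) b (WSum e r s g))"
| D2: "eqv st (WSum e r s (WSum f t u g)) (WSum e r 1 (WSum f (s * t) (s * u) g))"
| D3: "eqv st (Seq (Tst b) (WSum e r s f)) (Seq (Tst b) (WSum (Seq (Tst b) e) r s (Seq (Tst b) f)))"
| S1l: "eqv st (Seq (Tst BOne) e) e"
| S1r: "eqv st e (Seq e (Tst BOne))"
| S2: "eqv st (Seq (Seq e f) g) (Seq e (Seq f g))"
| S3: "eqv st (Seq (Tst BZero) e) (Tst BZero)"
| S4: "eqv st (Seq (WSum e r s f) g) (WSum (Seq e g) r s (Seq f g))"
| S5: "eqv st (Seq (Guard e b f) g) (Guard (Seq e g) b (Seq f g))"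
| S6: "eqv st (Seq (Ret v) e) (Ret v)"
| S7: "eqv st (Seq (Tst b) (Tst c)) (Tst (BAnd b c))"
| L1: "eqv st (Loop e b) (Guard (Seq e (Loop e b)) b (Tst BOne))"
| L2: "eqv st e (Guard (WSum f r s (Tst BOne)) c g) \<Longrightarrow>
       eqv st (Seq (Tst c) (Loop e b))
              (Seq (Tst c) (Guard (Seq (odot (st s * r)) (Seq f (Loop e b))) b (Tst BOne)))"
| C1: "eqv st (odot 1) (Tst BOne)"
| C2: "eqv st (Seq (odot 0) e) (odot 0)"
| W1: "eqv st (WSum e r s e) (Seq (odot (r + s)) e)"
| W2: "eqv st (WSum e r s f) (WSum f s r e)"
| W3: "eqv st (WSum e r s (WSum f t u g)) (WSum (WSum e r (s * t) f) 1 (s * u) g)"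
| W4: "eqv st (WSum e (r * u) s f) (WSum (Seq (odot u) e) r s f)"
| F1: "eqv st g (Guard (Seq e g) b f) \<Longrightarrow> (\<forall>\<alpha>. Esem e \<alpha> = 0) \<Longrightarrow>
       eqv st g (Seq (Loop e b) f)"

text \<open>is_gsum I r e g: g is one of the expressions denoted by the generalized weighted
 sum of the r i \<cdot> e i over I, for some choice of the order in which indices are peeled
 off (empty sum = odot 0).\<close>

inductive is_gsum :: "'i set \<Rightarrow> ('i \<Rightarrow> 's::{semiring_0,monoid_mult}) \<Rightarrow>
    ('i \<Rightarrow> ('t, 'p, 'v, 's) exp) \<Rightarrow> ('t, 'p, 'v, 's) exp \<Rightarrow> bool" where
  gsum_empty: "is_gsum {} r e (odot 0)"
| gsum_insert: "finite I \<Longrightarrow> j \<in> I \<Longrightarrow> is_gsum (I - {j}) r e g \<Longrightarrow>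
     is_gsum I r e (WSum (e j) (r j) 1 g)"

end

theory Submission
  imports Defs
begin

(* Any two readings of a generalized weighted sum are equivalent: two peeling orders
   differ by transpositions of adjacent summands, which W3 and W2 justify.  Collapsing the
   summands along the fibres of e then only needs the merging law
   e \<oplus>(r,1) (e \<oplus>(s,1) g) \<equiv> e \<oplus>(r+s,1) g, a consequence of W3, W1 and W4.
   No hypothesis on the semiring beyond its axioms is needed. *)

declare eqv.trans [trans]

lemma eqv_WSum_swap:
  "eqv st (WSum a r 1 (WSum b s 1 g)) (WSum b s 1 (WSum a r 1 g))"
proof -
  have "eqv st (WSum a r 1 (WSum b s 1 g)) (WSum (WSum a r s b) 1 1 g)"
    using eqv.W3[of st a r 1 b s 1 g] by simp
  also have "eqv st \<dots> (WSum (WSum b s r a) 1 1 g)"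
    by (intro eqv.cong_WSum eqv.W2 eqv.refl)
  also have "eqv st \<dots> (WSum b s 1 (WSum a r 1 g))"
    using eqv.sym[OF eqv.W3[of st b s 1 a r 1 g]] by simp
  finally show ?thesis .
qed

lemma eqv_WSum_merge:
  "eqv st (WSum a r 1 (WSum a s 1 g)) (WSum a (r + s) 1 g)"
proof -
  have "eqv st (WSum a r 1 (WSum a s 1 g)) (WSum (WSum a r s a) 1 1 g)"
    using eqv.W3[of st a r 1 a s 1 g] by simp
  also have "eqv st \<dots> (WSum (Seq (odot (r + s)) a) 1 1 g)"
    by (intro eqv.cong_WSum eqv.W1 eqv.refl)
  also have "eqv st \<dots> (WSum a (r + s) 1 g)"
    using eqv.sym[OF eqv.W4[of st a 1 "r + s" 1 g]] by simp
  finally show ?thesis .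
qed

lemma is_gsum_finite: "is_gsum I r e g \<Longrightarrow> finite I"
  by (induction rule: is_gsum.induct) auto

lemma is_gsum_emptyD: "is_gsum {} r e g \<Longrightarrow> g = odot 0"
  by (auto elim: is_gsum.cases)

lemma is_gsum_exists: "finite I \<Longrightarrow> \<exists>g. is_gsum I r e g"
proof (induction I rule: finite_induct)
  case empty
  then show ?case using gsum_empty by blast
next
  case (insert j F)
  then obtain g where "is_gsum (insert j F - {j}) r e g" by auto
  then show ?case using insert.hyps by (blast intro: gsum_insert)
qed

lemma is_gsum_weight_cong:
  "is_gsum I r e g \<Longrightarrow> (\<And>i. i \<in> I \<Longrightarrow> r i = r' i) \<Longrightarrow> is_gsum I r' e g"
proof (induction rule: is_gsum.induct)
  case (gsum_empty r e)
  show ?case by (rule is_gsum.gsum_empty)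
next
  case (gsum_insert I j r e g)
  then have "is_gsum I r' e (WSum (e j) (r' j) 1 g)"
    by (intro is_gsum.gsum_insert) auto
  then show ?case using gsum_insert by simp
qed

lemma is_gsum_eqv: "is_gsum I r e g1 \<Longrightarrow> is_gsum I r e g2 \<Longrightarrow> eqv st g1 g2"
proof (induction "card I" arbitrary: I g1 g2 rule: less_induct)
  case less
  have fin: "finite I" using less.prems(1) by (rule is_gsum_finite)
  show ?case
  proof (cases "I = {}")
    case True
    then show ?thesis using less.prems is_gsum_emptyD eqv.refl by metis
  next
    case False
    obtain j g1' where j: "j \<in> I" "is_gsum (I - {j}) r e g1'" "g1 = WSum (e j) (r j) 1 g1'"
      using less.prems(1) False by (cases rule: is_gsum.cases) auto
    obtain k g2' where k: "k \<in> I" "is_gsum (I - {k}) r e g2'" "g2 = WSum (e k) (r k) 1 g2'"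
      using less.prems(2) False by (cases rule: is_gsum.cases) auto
    have IH_j: "eqv st g1' g" if "is_gsum (I - {j}) r e g" for g
      using less.hyps[OF card_Diff1_less[OF fin j(1)]] j(2) that by blast
    have IH_k: "eqv st g2' g" if "is_gsum (I - {k}) r e g" for g
      using less.hyps[OF card_Diff1_less[OF fin k(1)]] k(2) that by blast
    show ?thesis
    proof (cases "j = k")
      case True
      then show ?thesis using j k IH_j by (simp add: eqv.cong_WSum eqv.refl)
    next
      case False
      obtain g3 where g3: "is_gsum (I - {j} - {k}) r e g3"
        using is_gsum_exists fin by blast
      moreover have "I - {k} - {j} = I - {j} - {k}" by blast
      ultimately have g3': "is_gsum (I - {k} - {j}) r e g3" by simp
      have "is_gsum (I - {j}) r e (WSum (e k) (r k) 1 g3)"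
        using g3 k(1) False fin by (intro is_gsum.gsum_insert) auto
      then have "eqv st g1 (WSum (e j) (r j) 1 (WSum (e k) (r k) 1 g3))"
        unfolding j(3) by (intro eqv.cong_WSum eqv.refl IH_j)
      also have "eqv st \<dots> (WSum (e k) (r k) 1 (WSum (e j) (r j) 1 g3))"
        by (rule eqv_WSum_swap)
      also have "eqv st \<dots> g2"
      proof -
        have "is_gsum (I - {k}) r e (WSum (e j) (r j) 1 g3)"
          using g3' j(1) False fin by (intro is_gsum.gsum_insert) auto
        then show ?thesis
          unfolding k(3) by (intro eqv.sym[OF eqv.cong_WSum] eqv.refl IH_k)
      qed
      finally show ?thesis .
    qed
  qed
qed

lemma is_gsum_remove_eqv:
  assumes "is_gsum I r e g" "j \<in> I" "is_gsum (I - {j}) r e g'"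
  shows "eqv st g (WSum (e j) (r j) 1 g')"
  using assms is_gsum_finite[OF assms(1)]
  by (blast intro: is_gsum_eqv is_gsum.gsum_insert)

lemma sum_fibre_insert:
  assumes "finite F" "j \<notin> F"
  shows "(\<Sum>i\<in>{i\<in>insert j F. f i = x}. r i)
           = (if f j = x then r j else 0) + (\<Sum>i\<in>{i\<in>F. f i = x}. r i)"
proof -
  have "{i\<in>insert j F. f i = x} = (if f j = x then insert j {i\<in>F. f i = x} else {i\<in>F. f i = x})"
    by auto
  then show ?thesis using assms by simp
qed

lemma is_gsum_fibres_eqv:
  assumes "is_gsum I r (\<lambda>i. k (f i)) g"
    and "is_gsum (f ` I) (\<lambda>x. \<Sum>i\<in>{i\<in>I. f i = x}. r i) k h"
  shows "eqv st g h"
  using is_gsum_finite[OF assms(1)] assms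
proof (induction I arbitrary: g h rule: finite_induct)
  case empty
  then have "g = odot 0" "h = odot 0" by (simp_all add: is_gsum_emptyD)
  then show ?case by (simp add: eqv.refl)
next
  case (insert j F)
  define W where "W = (\<lambda>x. \<Sum>i\<in>{i\<in>insert j F. f i = x}. r i)"
  define W' where "W' = (\<lambda>x. \<Sum>i\<in>{i\<in>F. f i = x}. r i)"
  have IH: "eqv st g' h'" if "is_gsum F r (\<lambda>i. k (f i)) g'" "is_gsum (f ` F) W' k h'" for g' h'
    using insert.IH that unfolding W'_def by blast
  have W_off: "W x = W' x" if "x \<noteq> f j" for x
    unfolding W_def W'_def sum_fibre_insert[OF insert.hyps] using that by simp
  have W_at: "W (f j) = r j + W' (f j)"
    unfolding W_def W'_def sum_fibre_insert[OF insert.hyps] by simp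
  obtain g' where g': "is_gsum F r (\<lambda>i. k (f i)) g'"
    using is_gsum_exists[OF insert.hyps(1)] by blast
  have "finite (f ` insert j F - {f j})"
    using insert.hyps(1) by simp
  then obtain h' where h': "is_gsum (f ` insert j F - {f j}) W k h'"
    using is_gsum_exists by blast
  have h'_F: "is_gsum (f ` insert j F - {f j}) W' k h'"
    using is_gsum_weight_cong[OF h'] W_off by auto
  have "insert j F - {j} = F" using insert.hyps(2) by simp
  then have "eqv st g (WSum (k (f j)) (r j) 1 g')"
    using is_gsum_remove_eqv[OF insert.prems(1) insertI1, of g'] g' by simp
  also have "eqv st \<dots> (WSum (k (f j)) (W (f j)) 1 h')"
  proof (cases "f j \<in> f ` F")
    case True
    then have "is_gsum (f ` F) W' k (WSum (k (f j)) (W' (f j)) 1 h')"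
      using h'_F insert.hyps(1) by (intro is_gsum.gsum_insert) (auto simp: insert_absorb)
    then have "eqv st (WSum (k (f j)) (r j) 1 g')
                 (WSum (k (f j)) (r j) 1 (WSum (k (f j)) (W' (f j)) 1 h'))"
      by (intro eqv.cong_WSum eqv.refl IH[OF g'])
    also have "eqv st \<dots> (WSum (k (f j)) (W (f j)) 1 h')"
      unfolding W_at by (rule eqv_WSum_merge)
    finally show ?thesis .
  next
    case False
    then have no_fibre: "{i\<in>F. f i = f j} = {}" by (force simp: image_iff)
    have "W (f j) = r j" using W_at unfolding W'_def no_fibre by simp
    moreover have "f ` insert j F - {f j} = f ` F" using False by auto
    ultimately show ?thesis
      using IH[OF g'] h'_F by (simp add: eqv.cong_WSum eqv.refl)
  qed
  also have "eqv st \<dots> h"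
    using is_gsum_remove_eqv[of "f ` insert j F" W k h "f j" h'] insert.prems(2) h'
    unfolding W_def by (simp add: eqv.sym[of st h])
  finally show ?case .
qed

theorem mainTheorem7:
  fixes st :: "'s::{semiring_0,monoid_mult} \<Rightarrow> 's"
    and I :: "'i set"
    and r :: "'i \<Rightarrow> 's"
    and e :: "'i \<Rightarrow> ('t::finite, 'p, 'v, 's) exp"
    and g h :: "('t, 'p, 'v, 's) exp"
  assumes "positive_semiring TYPE('s)"
    and "refinement_semiring TYPE('s)"
    and "conway_star st"
    and "finite I" and "I \<noteq> {}"
    and "is_gsum I r e g"
    and "is_gsum (e ` I) (\<lambda>x. \<Sum>i\<in>{i\<in>I. e i = x}. r i) id h"
  shows "eqv st g h"
proof -
  have "is_gsum I r (\<lambda>i. id (e i)) g" using assms(6) by simp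
  then show ?thesis using assms(7) by (rule is_gsum_fibres_eqv)
qed

end
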